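(* Let $n\ge2$, $\epsilon\in(0,1)$, let $Q^0\in\mathbb{S}^n$ with $Q^0_i>0$ for all $i$, let $\widehat{P}\in\mathbb{S}^n$ be fixed (not varying with $p$), take $\mathcal{Q}=\{Q^0\}$, and for each $p$ let $\alpha_{\mathrm{L}}=\alpha_{\mathrm{L}}(p)$ be as defined below. Then $$\alpha_{\mathrm{L}}\le\kappa(\widehat{P}\,\|\,Q^0)\qquad\text{and}\qquad\lim_{p\to\infty}\alpha_{\mathrm{L}}=\kappa(\widehat{P}\,\|\,Q^0).$$
   Context: $\mathbb{S}^n=\{P\in\mathbb{R}^n:\sum_iP_i=1,\ P_i\ge0\}$. $D(P\|Q)=\sum_iP_i\log(P_i/Q_i)$. The separation distance is $\kappa(P\|Q)=\max_{i\in[n]}\left(1-\frac{P_i}{Q_i}\right)$. For $\alpha\in[0,1]$ let $\mathcal{P}(\widehat{P},\alpha)=\{P\in\mathbb{S}^n: P_i\le \widehat{P}_i/(1-\alpha),\ i=1,\dots,n\}$ and $D^*_\alpha=\min_{P\in\mathcal{P}(\widehat{P},\alpha),\,Q\in\mathcal{Q}}D(P\|Q)=\min_{P\in\mathcal{P}(\widehat{P},\alpha)}D(P\|Q^0)$. Define $$\alpha_{\mathrm{L}}=\max\left\{\alpha:\ D^*_\alpha\ \ge\ \frac{1}{p(1-\alpha)}\log\left(\frac1\epsilon\right)+\frac{2n}{p(1-\alpha)}\log\big(p(1-\alpha)+1\big)\right\}.$$ *)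

theory Defs
  imports "HOL-Analysis.Analysis"
begin

definition prob_simplex :: "('n::finite \<Rightarrow> real) set" where
  "prob_simplex = {P. (\<Sum>i\<in>UNIV. P i) = 1 \<and> (\<forall>i. P i \<ge> 0)}"

definition KL :: "('n::finite \<Rightarrow> real) \<Rightarrow> ('n \<Rightarrow> real) \<Rightarrow> real" where
  "KL P Q = (\<Sum>i\<in>UNIV. P i * ln (P i / Q i))"

definition sep_dist :: "('n::finite \<Rightarrow> real) \<Rightarrow> ('n \<Rightarrow> real) \<Rightarrow> real" where
  "sep_dist P Q = Max (range (\<lambda>i. 1 - P i / Q i))"

definition amb_set :: "('n::finite \<Rightarrow> real) \<Rightarrow> real \<Rightarrow> ('n \<Rightarrow> real) set" where
  "amb_set Phat \<alpha> = {P \<in> prob_simplex. \<forall>i. P i \<le> Phat i / (1 - \<alpha>)}"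

definition Dstar :: "('n::finite \<Rightarrow> real) \<Rightarrow> ('n \<Rightarrow> real) \<Rightarrow> real \<Rightarrow> real" where
  "Dstar Phat Q0 \<alpha> = Inf ((\<lambda>P. KL P Q0) ` amb_set Phat \<alpha>)"

definition alphaL_set :: "('n::finite \<Rightarrow> real) \<Rightarrow> ('n \<Rightarrow> real) \<Rightarrow> real \<Rightarrow> nat \<Rightarrow> real set" where
  "alphaL_set Phat Q0 \<epsilon> p = {\<alpha>. 0 \<le> \<alpha> \<and> \<alpha> < 1 \<and>
     Dstar Phat Q0 \<alpha> \<ge> 1 / (real p * (1 - \<alpha>)) * ln (1 / \<epsilon>)
        + 2 * real CARD('n) / (real p * (1 - \<alpha>)) * ln (real p * (1 - \<alpha>) + 1)}"

text \<open>alpha_L = max of that set (taken as its supremum); convention 0 if empty.\<close>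
definition alphaL :: "('n::finite \<Rightarrow> real) \<Rightarrow> ('n \<Rightarrow> real) \<Rightarrow> real \<Rightarrow> nat \<Rightarrow> real" where
  "alphaL Phat Q0 \<epsilon> p = (if alphaL_set Phat Q0 \<epsilon> p = {} then 0 else Sup (alphaL_set Phat Q0 \<epsilon> p))"

end

theory Submission
  imports Defs "HOL-Real_Asymp.Real_Asymp"
begin

text \<open>
  If \<alpha> \<ge> \<kappa>(Phat, Q0) then Q0 itself lies in the ambiguity set, so D*(\<alpha>) = 0 and
  \<alpha> is not admissible, because the threshold on the right is positive; hence \<alpha>_L \<le> \<kappa>.
  If \<alpha> < \<kappa>, let j attain the maximum in \<kappa>. Every P in the ambiguity set satisfies
  P j \<le> Phat j / (1 - \<alpha>) < Q0 j, which keeps D(P, Q0) away from 0 by a constant independent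
  of p. The threshold is O(log p / p), so \<alpha> becomes admissible for all large p, and
  therefore \<alpha>_L \<rightarrow> \<kappa>.
\<close>

definition kl_term :: "real \<Rightarrow> real \<Rightarrow> real" where
  "kl_term x q = x * ln (x / q) - x + q"

lemma kl_term_zero [simp]: "kl_term 0 q = q"
  by (simp add: kl_term_def)

lemma kl_term_nonneg:
  assumes "0 \<le> x" "0 < q"
  shows "0 \<le> kl_term x q"
proof (cases "x = 0")
  case False
  with assms have x: "0 < x" by simp
  have "x * ln (q / x) \<le> x * (q / x - 1)"
    using x assms by (intro mult_left_mono ln_le_minus_one) auto
  also have "\<dots> = q - x"
    using x by (simp add: field_simps)
  finally show ?thesis
    using x assms by (simp add: kl_term_def ln_div right_diff_distrib)
qed (use assms in simp)

lemma kl_term_pos: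
  assumes "0 \<le> b" "b < q"
  shows "0 < kl_term b q"
proof (cases "b = 0")
  case False
  with assms have b: "0 < b" by simp
  have "ln (q / b) \<noteq> q / b - 1"
    using ln_eq_minus_one[of "q / b"] b assms by auto
  then have "ln (q / b) < q / b - 1"
    using ln_le_minus_one[of "q / b"] b assms by simp
  then have "b * ln (q / b) < b * (q / b - 1)"
    using b by simp
  also have "\<dots> = q - b"
    using b by (simp add: field_simps)
  finally show ?thesis
    using b assms by (simp add: kl_term_def ln_div right_diff_distrib)
qed (use assms in simp)

text \<open>Writing x ln(x/q) = x ln(x/b) + x ln(b/q) reduces this to nonnegativity of the term for (x, b).\<close>
lemma kl_term_antimono:
  assumes "0 \<le> x" "x \<le> b" "b \<le> q" "0 < q"
  shows "kl_term b q \<le> kl_term x q"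
proof (cases "x = 0")
  case True
  have "ln (b / q) \<le> 0"
    using assms by (cases "b = 0") auto
  then have "b * ln (b / q) \<le> 0"
    using assms by (simp add: mult_nonneg_nonpos)
  with True assms show ?thesis
    by (simp add: kl_term_def)
next
  case False
  with assms have x: "0 < x" and b: "0 < b" by auto
  have ln_bq: "ln (b / q) \<le> 0"
    using b assms by simp
  have "x * ln (x / q) = x * ln (x / b) + x * ln (b / q)"
    using x b assms by (simp add: ln_div algebra_simps)
  moreover have "x - b \<le> x * ln (x / b)"
    using kl_term_nonneg[of x b] x b by (simp add: kl_term_def)
  moreover have "b * ln (b / q) \<le> x * ln (b / q)"
    using ln_bq assms by (simp add: mult_right_mono_neg)
  ultimately show ?thesis
    by (simp add: kl_term_def)
qed

lemma KL_eq_sum_kl_term: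
  fixes P Q :: "'n::finite \<Rightarrow> real"
  assumes "sum P UNIV = sum Q UNIV"
  shows "KL P Q = (\<Sum>i\<in>UNIV. kl_term (P i) (Q i))"
  using assms by (simp add: KL_def kl_term_def sum.distrib sum_subtractf)

lemma KL_ge_kl_term:
  fixes P Q :: "'n::finite \<Rightarrow> real"
  assumes "\<forall>i. 0 \<le> P i" "\<forall>i. 0 < Q i" "sum P UNIV = sum Q UNIV"
    and "P j \<le> b" "b \<le> Q j"
  shows "kl_term b (Q j) \<le> KL P Q"
proof -
  have "kl_term b (Q j) \<le> kl_term (P j) (Q j)"
    using assms by (intro kl_term_antimono) auto
  also have "\<dots> \<le> (\<Sum>i\<in>UNIV. kl_term (P i) (Q i))"
    using assms kl_term_nonneg by (intro member_le_sum) auto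
  finally show ?thesis
    using KL_eq_sum_kl_term[OF assms(3)] by simp
qed

lemma KL_nonneg:
  fixes P Q :: "'n::finite \<Rightarrow> real"
  assumes "\<forall>i. 0 \<le> P i" "\<forall>i. 0 < Q i" "sum P UNIV = sum Q UNIV"
  shows "0 \<le> KL P Q"
  using KL_eq_sum_kl_term[OF assms(3)] assms kl_term_nonneg by (simp add: sum_nonneg)

lemma KL_self:
  fixes Q :: "'n::finite \<Rightarrow> real"
  assumes "\<forall>i. 0 < Q i"
  shows "KL Q Q = 0"
  using assms by (simp add: KL_def less_imp_neq[symmetric])

lemma sep_dist_ge: "1 - P i / Q i \<le> sep_dist P Q"
  by (simp add: sep_dist_def)

lemma sep_dist_attained: "\<exists>j. sep_dist P Q = 1 - P j / Q j"
proof -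
  have "sep_dist P Q \<in> range (\<lambda>i. 1 - P i / Q i)"
    unfolding sep_dist_def by (intro Max_in) auto
  then show ?thesis
    by auto
qed

lemma sep_dist_nonneg:
  fixes P Q :: "'n::finite \<Rightarrow> real"
  assumes "\<forall>i. 0 < Q i" "sum P UNIV = sum Q UNIV"
  shows "0 \<le> sep_dist P Q"
proof (rule ccontr)
  assume "\<not> 0 \<le> sep_dist P Q"
  then have "1 - P i / Q i < 0" for i
    using sep_dist_ge[of P i Q] by linarith
  then have "Q i < P i" for i
    using assms by (simp add: field_simps)
  then have "sum Q UNIV < sum P UNIV"
    by (intro sum_strict_mono) auto
  with assms show False
    by simp
qed

lemma sep_dist_le_one:
  assumes "\<forall>i. 0 \<le> P i" "\<forall>i. 0 < Q i"
  shows "sep_dist P Q \<le> 1"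
proof -
  obtain j where "sep_dist P Q = 1 - P j / Q j"
    using sep_dist_attained by blast
  moreover have "0 \<le> P j / Q j"
    using assms by (simp add: less_imp_le)
  ultimately show ?thesis
    by simp
qed

lemma mem_amb_set_self:
  assumes "P \<in> prob_simplex" "0 \<le> \<alpha>" "\<alpha> < 1"
  shows "P \<in> amb_set P \<alpha>"
proof -
  have "P i \<le> P i / (1 - \<alpha>)" for i
    using assms by (simp add: prob_simplex_def le_divide_eq mult_left_le)
  with assms show ?thesis
    by (simp add: amb_set_def)
qed

lemma mem_amb_set_reference:
  assumes "Q \<in> prob_simplex" "\<forall>i. 0 < Q i" "sep_dist P Q \<le> \<alpha>" "\<alpha> < 1"
  shows "Q \<in> amb_set P \<alpha>"
proof -
  have "Q i \<le> P i / (1 - \<alpha>)" for i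
  proof -
    have "1 - \<alpha> \<le> P i / Q i"
      using sep_dist_ge[of P i Q] assms by linarith
    then have "(1 - \<alpha>) * Q i \<le> P i"
      using assms(2) by (simp add: le_divide_eq)
    then show ?thesis
      using assms(4) by (simp add: le_divide_eq mult.commute)
  qed
  with assms show ?thesis
    by (simp add: amb_set_def)
qed

lemma bdd_below_KL_amb_set:
  assumes "Q \<in> prob_simplex" "\<forall>i. 0 < Q i"
  shows "bdd_below ((\<lambda>P'. KL P' Q) ` amb_set P \<alpha>)"
  using assms by (intro bdd_belowI[of _ 0]) (auto simp: amb_set_def prob_simplex_def intro!: KL_nonneg)

lemma Dstar_nonpos:
  assumes "Q \<in> prob_simplex" "\<forall>i. 0 < Q i" "sep_dist P Q \<le> \<alpha>" "\<alpha> < 1"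
  shows "Dstar P Q \<alpha> \<le> 0"
proof -
  have "Dstar P Q \<alpha> \<le> KL Q Q"
    unfolding Dstar_def using assms
    by (intro cInf_lower bdd_below_KL_amb_set imageI mem_amb_set_reference)
  with KL_self[OF assms(2)] show ?thesis
    by simp
qed

lemma Dstar_pos:
  assumes "P \<in> prob_simplex" "Q \<in> prob_simplex" "\<forall>i. 0 < Q i"
    and "0 \<le> \<alpha>" "\<alpha> < sep_dist P Q"
  shows "0 < Dstar P Q \<alpha>"
proof -
  obtain j where j: "sep_dist P Q = 1 - P j / Q j"
    using sep_dist_attained by blast
  have \<alpha>1: "\<alpha> < 1"
    using sep_dist_le_one[of P Q] assms by (auto simp: prob_simplex_def)
  define b where "b = P j / (1 - \<alpha>)"
  have "P j / Q j < 1 - \<alpha>"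
    using assms j by linarith
  then have "P j < (1 - \<alpha>) * Q j"
    using assms(3) by (simp add: divide_less_eq)
  then have b: "0 \<le> b" "b < Q j"
    using assms(1) \<alpha>1 by (auto simp: b_def prob_simplex_def divide_less_eq mult.commute)
  have "kl_term b (Q j) \<le> Dstar P Q \<alpha>"
    unfolding Dstar_def
  proof (rule cInf_greatest)
    show "(\<lambda>P'. KL P' Q) ` amb_set P \<alpha> \<noteq> {}"
      using mem_amb_set_self[OF assms(1,4) \<alpha>1] by blast
  next
    fix d
    assume "d \<in> (\<lambda>P'. KL P' Q) ` amb_set P \<alpha>"
    then obtain P' where P': "P' \<in> amb_set P \<alpha>" "d = KL P' Q"
      by blast
    have "\<forall>i. 0 \<le> P' i" "sum P' UNIV = sum Q UNIV" "P' j \<le> b"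
      using P'(1) assms(2) by (auto simp: amb_set_def prob_simplex_def b_def)
    then show "kl_term b (Q j) \<le> d"
      unfolding P'(2) using assms(3) b by (intro KL_ge_kl_term) auto
  qed
  with kl_term_pos[OF b] show ?thesis
    by simp
qed

definition alphaL_threshold :: "nat \<Rightarrow> real \<Rightarrow> nat \<Rightarrow> real \<Rightarrow> real" where
  "alphaL_threshold n \<epsilon> p \<alpha> = 1 / (real p * (1 - \<alpha>)) * ln (1 / \<epsilon>)
     + 2 * real n / (real p * (1 - \<alpha>)) * ln (real p * (1 - \<alpha>) + 1)"

lemma alphaL_set_eq:
  "alphaL_set P Q \<epsilon> p =
     {\<alpha>. 0 \<le> \<alpha> \<and> \<alpha> < 1 \<and> alphaL_threshold CARD('n) \<epsilon> p \<alpha> \<le> Dstar P Q \<alpha>}"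
  for P Q :: "'n::finite \<Rightarrow> real"
  by (simp add: alphaL_set_def alphaL_threshold_def)

lemma alphaL_threshold_pos:
  assumes "1 \<le> p" "\<alpha> < 1" "0 < \<epsilon>" "\<epsilon> < 1"
  shows "0 < alphaL_threshold n \<epsilon> p \<alpha>"
proof -
  have p\<alpha>: "0 < real p * (1 - \<alpha>)"
    using assms by simp
  have "0 < 1 / (real p * (1 - \<alpha>)) * ln (1 / \<epsilon>)"
    using p\<alpha> assms by simp
  moreover have "0 \<le> 2 * real n / (real p * (1 - \<alpha>)) * ln (real p * (1 - \<alpha>) + 1)"
    using p\<alpha> by simp
  ultimately show ?thesis
    unfolding alphaL_threshold_def by linarith
qed

lemma alphaL_threshold_tendsto_zero:
  assumes "\<alpha> < 1"
  shows "(\<lambda>p. alphaL_threshold n \<epsilon> p \<alpha>) \<longlonglongrightarrow> 0"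
proof -
  have "((\<lambda>p::nat. 1 / (real p * c) * L + 2 * N / (real p * c) * ln (real p * c + 1)) \<longlongrightarrow> 0)
      at_top" if "0 < c" for c L N :: real
    using that by real_asymp
  from this[of "1 - \<alpha>"] assms show ?thesis
    by (simp add: alphaL_threshold_def)
qed

lemma alphaL_set_subset:
  fixes P Q :: "'n::finite \<Rightarrow> real"
  assumes "Q \<in> prob_simplex" "\<forall>i. 0 < Q i" "0 < \<epsilon>" "\<epsilon> < 1" "1 \<le> p"
  shows "alphaL_set P Q \<epsilon> p \<subseteq> {0..<sep_dist P Q}"
proof
  fix \<alpha>
  assume \<alpha>: "\<alpha> \<in> alphaL_set P Q \<epsilon> p"
  then have \<alpha>0: "0 \<le> \<alpha>" and \<alpha>1: "\<alpha> < 1"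
    and admissible: "alphaL_threshold CARD('n) \<epsilon> p \<alpha> \<le> Dstar P Q \<alpha>"
    by (auto simp: alphaL_set_eq)
  have "\<alpha> < sep_dist P Q"
  proof (rule ccontr)
    assume "\<not> \<alpha> < sep_dist P Q"
    then have "Dstar P Q \<alpha> \<le> 0"
      using assms \<alpha>1 by (intro Dstar_nonpos) auto
    moreover have "0 < alphaL_threshold CARD('n) \<epsilon> p \<alpha>"
      using assms \<alpha>1 by (intro alphaL_threshold_pos)
    ultimately show False
      using admissible by linarith
  qed
  with \<alpha>0 show "\<alpha> \<in> {0..<sep_dist P Q}"
    by simp
qed

lemma eventually_mem_alphaL_set:
  fixes P Q :: "'n::finite \<Rightarrow> real"
  assumes "P \<in> prob_simplex" "Q \<in> prob_simplex" "\<forall>i. 0 < Q i"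
    and "0 \<le> \<alpha>" "\<alpha> < sep_dist P Q"
  shows "eventually (\<lambda>p. \<alpha> \<in> alphaL_set P Q \<epsilon> p) sequentially"
proof -
  have \<alpha>1: "\<alpha> < 1"
    using sep_dist_le_one[of P Q] assms by (auto simp: prob_simplex_def)
  have "eventually (\<lambda>p. alphaL_threshold CARD('n) \<epsilon> p \<alpha> < Dstar P Q \<alpha>) sequentially"
    using alphaL_threshold_tendsto_zero[OF \<alpha>1, of "CARD('n)"] Dstar_pos[OF assms] by (rule order_tendstoD)
  then show ?thesis
    by eventually_elim (use assms(4) \<alpha>1 in \<open>simp add: alphaL_set_eq\<close>)
qed

lemma bdd_above_alphaL_set: "bdd_above (alphaL_set P Q \<epsilon> p)"
  by (intro bdd_aboveI[of _ 1]) (auto simp: alphaL_set_def)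

lemma alphaL_ge:
  assumes "\<alpha> \<in> alphaL_set P Q \<epsilon> p"
  shows "\<alpha> \<le> alphaL P Q \<epsilon> p"
  using assms cSup_upper[OF assms bdd_above_alphaL_set] by (auto simp: alphaL_def)

lemma alphaL_nonneg: "0 \<le> alphaL P Q \<epsilon> p"
proof (cases "alphaL_set P Q \<epsilon> p = {}")
  case False
  then obtain \<alpha> where \<alpha>: "\<alpha> \<in> alphaL_set P Q \<epsilon> p"
    by blast
  then have "0 \<le> \<alpha>"
    by (simp add: alphaL_set_def)
  also have "\<alpha> \<le> alphaL P Q \<epsilon> p"
    using \<alpha> by (rule alphaL_ge)
  finally show ?thesis .
qed (simp add: alphaL_def)

lemma alphaL_le:
  assumes "alphaL_set P Q \<epsilon> p \<subseteq> {..c}" "0 \<le> c"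
  shows "alphaL P Q \<epsilon> p \<le> c"
  using assms by (auto simp: alphaL_def intro!: cSup_least)

theorem theorem6:
  fixes Q0 Phat :: "'n::finite \<Rightarrow> real" and \<epsilon> :: real
  assumes "CARD('n) \<ge> 2"
    and "0 < \<epsilon>" and "\<epsilon> < 1"
    and "Q0 \<in> prob_simplex" and "\<forall>i. Q0 i > 0"
    and "Phat \<in> prob_simplex"
  shows "(\<forall>p::nat. p \<ge> 1 \<longrightarrow> alphaL Phat Q0 \<epsilon> p \<le> sep_dist Phat Q0)
    \<and> ((\<lambda>p. alphaL Phat Q0 \<epsilon> p) \<longlonglongrightarrow> sep_dist Phat Q0)"
proof -
  let ?\<kappa> = "sep_dist Phat Q0"
  have \<kappa>_nonneg: "0 \<le> ?\<kappa>"
    using assms by (intro sep_dist_nonneg) (auto simp: prob_simplex_def)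
  have upper: "alphaL Phat Q0 \<epsilon> p \<le> ?\<kappa>" if "1 \<le> p" for p
    using alphaL_set_subset[of Q0 \<epsilon> p Phat] assms that \<kappa>_nonneg
    by (intro alphaL_le) auto
  have lower: "eventually (\<lambda>p. y < alphaL Phat Q0 \<epsilon> p) sequentially" if "y < ?\<kappa>" for y
  proof (cases "y < 0")
    case True
    then show ?thesis
      by (intro always_eventually allI less_le_trans[OF True alphaL_nonneg])
  next
    case False
    let ?\<alpha> = "(y + ?\<kappa>) / 2"
    have "eventually (\<lambda>p. ?\<alpha> \<in> alphaL_set Phat Q0 \<epsilon> p) sequentially"
      using False that assms by (intro eventually_mem_alphaL_set) auto
    then show ?thesis
      by eventually_elim (use that alphaL_ge in \<open>fastforce\<close>)
  qed
  have "eventually (\<lambda>p. alphaL Phat Q0 \<epsilon> p \<le> ?\<kappa>) sequentially"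
    using eventually_ge_at_top[of 1] by eventually_elim (rule upper)
  then have "(\<lambda>p. alphaL Phat Q0 \<epsilon> p) \<longlonglongrightarrow> ?\<kappa>"
    by (intro order_tendstoI lower) (auto elim: eventually_mono)
  with upper show ?thesis
    by blast
qed

end
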